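(* Fix $\epsilon>0$ and suppose $p(1-p)n\ge(1+\epsilon)\log n$ for all sufficiently large $n$; let $d=\frac{np}{1-p}$. Then, with probability tending to $1$ as $n\to\infty$, $G(n,p)$ contains no closed set of size greater than $\frac n2+\frac{7n}{2\sqrt d}$.
   Context: $G(n,p)$ is the Erdős–Rényi random graph on $[n]$; $\Gamma(v)$ is the neighbourhood of $v$. A proper subset $S\subsetneq[n]$ is called closed if every $v\in[n]\setminus S$ satisfies $|\Gamma(v)\cap S|<|\Gamma(v)|/2$. *)

theory Defs
  imports "HOL-Probability.Probability"
begin

text \<open>Vertex set [n] is rendered as {..<n} = {0,...,n-1}. A graph on [n] is encoded by
  its edge indicator on the unordered pairs, represented as ordered pairs (i,j) with i<j<n.\<close>

definition vertex_pairs :: "nat \<Rightarrow> (nat \<times> nat) set" where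
  "vertex_pairs n = {(i, j). i < j \<and> j < n}"

definition gnp :: "nat \<Rightarrow> real \<Rightarrow> ((nat \<times> nat) \<Rightarrow> bool) pmf" where
  "gnp n p = Pi_pmf (vertex_pairs n) False (\<lambda>_. bernoulli_pmf p)"

definition adj :: "((nat \<times> nat) \<Rightarrow> bool) \<Rightarrow> nat \<Rightarrow> nat \<Rightarrow> bool" where
  "adj G u v \<longleftrightarrow> u \<noteq> v \<and> G (min u v, max u v)"

definition nbhd :: "nat \<Rightarrow> ((nat \<times> nat) \<Rightarrow> bool) \<Rightarrow> nat \<Rightarrow> nat set" where
  "nbhd n G v = {u \<in> {..<n}. adj G u v}"

definition closed_set :: "nat \<Rightarrow> ((nat \<times> nat) \<Rightarrow> bool) \<Rightarrow> nat set \<Rightarrow> bool" where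
  "closed_set n G S \<longleftrightarrow> S \<subset> {..<n} \<and>
     (\<forall>v \<in> {..<n} - S. real (card (nbhd n G v \<inter> S)) < real (card (nbhd n G v)) / 2)"

end

theory Submission
  imports Defs "HOL-Real_Asymp.Real_Asymp"
begin

text \<open>If \<open>S\<close> is closed and \<open>T\<close> is its complement, summing the closedness condition over
  \<open>v \<in> T\<close> shows that \<open>e(S, T) - 2 e(T) < 0\<close>. This is a weighted sum of independent edge
  indicators whose mean \<open>p |T| (n - 2|T| + 1)\<close> is large when \<open>|S|\<close> exceeds \<open>n/2\<close> by the stated
  margin, and its lower tail is controlled by exponential moments: for \<open>|T|\<close> below a small
  constant fraction of \<open>n\<close> a Chernoff bound gives probability at most \<open>n^-(1+\<epsilon>/2)|T|\<close>, and
  for larger \<open>T\<close> a second-order bound on the moment generating function gives \<open>e^-3n/2\<close>.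
  A union bound over all \<open>T\<close> then yields
  \<open>(1 + n^-(1+\<epsilon>/2))^n - 1 + (2 e^-3/2)^n \<rightarrow> 0\<close>.\<close>

section \<open>Weighting vertex pairs by a complement\<close>

lemma finite_vertex_pairs [simp]: "finite (vertex_pairs n)"
  by (rule finite_subset[of _ "{..<n} \<times> {..<n}"]) (auto simp: vertex_pairs_def)

lemma vertex_pairs_Suc: "vertex_pairs (Suc n) = vertex_pairs n \<union> (\<lambda>i. (i, n)) ` {..<n}"
  by (auto simp: vertex_pairs_def less_Suc_eq)

lemma sum_vertex_pairs_ordered:
  fixes f :: "nat \<Rightarrow> nat \<Rightarrow> real"
  shows "(\<Sum>e\<in>vertex_pairs n. f (fst e) (snd e) + f (snd e) (fst e))
       = (\<Sum>u<n. \<Sum>v<n. if u = v then 0 else f u v)"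
proof (induction n)
  case 0
  then show ?case by (simp add: vertex_pairs_def)
next
  case (Suc n)
  have disj: "vertex_pairs n \<inter> (\<lambda>i. (i, n)) ` {..<n} = {}"
    by (auto simp: vertex_pairs_def)
  have "(\<Sum>e\<in>vertex_pairs (Suc n). f (fst e) (snd e) + f (snd e) (fst e))
      = (\<Sum>e\<in>vertex_pairs n. f (fst e) (snd e) + f (snd e) (fst e)) + (\<Sum>i<n. f i n + f n i)"
    unfolding vertex_pairs_Suc
    by (subst sum.union_disjoint) (auto simp: disj sum.reindex inj_on_def)
  moreover have "(\<Sum>u<Suc n. \<Sum>v<Suc n. if u = v then 0 else f u v)
      = (\<Sum>u<n. \<Sum>v<n. if u = v then 0 else f u v) + (\<Sum>i<n. f i n + f n i)"
    by (simp add: sum.distrib)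
  ultimately show ?case using Suc by simp
qed

lemma sum_lessThan_skip:
  fixes h :: "nat \<Rightarrow> real"
  assumes "v < n"
  shows "(\<Sum>u<n. if u = v then 0 else h u) = (\<Sum>u<n. h u) - h v"
proof -
  have "(\<Sum>u<n. h u) = h v + (\<Sum>u\<in>{..<n}-{v}. h u)"
    by (rule sum.remove) (use assms in auto)
  moreover have "(\<Sum>u<n. if u = v then 0 else h u) = (\<Sum>u\<in>{..<n}-{v}. h u)"
    by (subst sum.remove[of _ v]) (use assms in \<open>auto intro!: sum.cong\<close>)
  ultimately show ?thesis by simp
qed

lemma sum_lessThan_indicator:
  fixes T :: "nat set"
  assumes "T \<subseteq> {..<n}"
  shows "(\<Sum>u<n. of_bool (u \<in> T) :: real) = real (card T)"
  using assms by (simp add: Int_absorb1)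

text \<open>For \<open>T\<close> the complement of a candidate closed set \<open>S\<close>, the vertex pair \<open>{u, v}\<close> gets weight
  \<open>1\<close> if it joins \<open>S\<close> to \<open>T\<close>, \<open>-2\<close> if it lies inside \<open>T\<close> and \<open>0\<close> otherwise; the weight is
  split into the two arcs so that summing over \<open>v \<in> T\<close> yields
  \<open>\<Sum>v\<in>T. |\<Gamma>(v) \<inter> S| - |\<Gamma>(v) \<inter> T|\<close>.\<close>

definition arc_weight :: "nat set \<Rightarrow> nat \<Rightarrow> nat \<Rightarrow> real" where
  "arc_weight T u v = of_bool (v \<in> T) * (if u \<in> T then -1 else 1)"

definition pair_weight :: "nat set \<Rightarrow> nat \<times> nat \<Rightarrow> real" where
  "pair_weight T e = arc_weight T (fst e) (snd e) + arc_weight T (snd e) (fst e)"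

definition excess :: "nat \<Rightarrow> nat set \<Rightarrow> ((nat \<times> nat) \<Rightarrow> bool) \<Rightarrow> real" where
  "excess n T G = (\<Sum>e\<in>vertex_pairs n. pair_weight T e * of_bool (G e))"

lemma pair_weight_cases: "pair_weight T e = 0 \<or> pair_weight T e = 1 \<or> pair_weight T e = -2"
  by (auto simp: pair_weight_def arc_weight_def)

lemma excess_eq_sum_arcs:
  "excess n T G = (\<Sum>v<n. \<Sum>u<n. arc_weight T u v * of_bool (adj G u v))"
proof -
  have "excess n T G = (\<Sum>e\<in>vertex_pairs n. arc_weight T (fst e) (snd e) * of_bool (adj G (fst e) (snd e))
        + arc_weight T (snd e) (fst e) * of_bool (adj G (snd e) (fst e)))"
    unfolding excess_def pair_weight_def
    by (intro sum.cong refl) (auto simp: vertex_pairs_def adj_def algebra_simps)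
  also have "\<dots> = (\<Sum>u<n. \<Sum>v<n. if u = v then 0 else arc_weight T u v * of_bool (adj G u v))"
    by (rule sum_vertex_pairs_ordered)
  also have "\<dots> = (\<Sum>u<n. \<Sum>v<n. arc_weight T u v * of_bool (adj G u v))"
    by (intro sum.cong refl) (auto simp: adj_def)
  also have "\<dots> = (\<Sum>v<n. \<Sum>u<n. arc_weight T u v * of_bool (adj G u v))"
    by (rule sum.swap)
  finally show ?thesis .
qed

lemma sum_arcs_into_complement:
  assumes "S \<subseteq> {..<n}" and "v \<in> {..<n} - S"
  shows "(\<Sum>u<n. arc_weight ({..<n} - S) u v * of_bool (adj G u v))
     = real (card (nbhd n G v \<inter> S)) - real (card (nbhd n G v - S))"
proof -
  have "{..<n} \<inter> {u. u \<in> nbhd n G v \<inter> S} = nbhd n G v \<inter> S"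
    and "{..<n} \<inter> {u. u \<in> nbhd n G v - S} = nbhd n G v - S"
    by (auto simp: nbhd_def)
  moreover have "(\<Sum>u<n. arc_weight ({..<n} - S) u v * of_bool (adj G u v))
      = (\<Sum>u<n. of_bool (u \<in> nbhd n G v \<inter> S)) - (\<Sum>u<n. of_bool (u \<in> nbhd n G v - S))"
    unfolding sum_subtractf[symmetric]
    by (intro sum.cong refl) (use assms in \<open>auto simp: arc_weight_def nbhd_def\<close>)
  ultimately show ?thesis
    by (simp only: sum_of_bool_eq finite_lessThan)
qed

lemma closed_set_excess_neg:
  assumes "closed_set n G S"
  shows "excess n ({..<n} - S) G < 0"
proof -
  define T where "T = {..<n} - S"
  have S: "S \<subseteq> {..<n}" and "T \<noteq> {}"
    using assms unfolding closed_set_def T_def by auto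
  have "excess n T G = (\<Sum>v<n. of_bool (v \<in> T) * (\<Sum>u<n. arc_weight T u v * of_bool (adj G u v)))"
    unfolding excess_eq_sum_arcs by (intro sum.cong refl) (auto simp: arc_weight_def)
  also have "\<dots> = (\<Sum>v\<in>T. \<Sum>u<n. arc_weight T u v * of_bool (adj G u v))"
    by (subst sum_of_bool_mult_eq) (auto intro!: sum.cong simp: T_def)
  also have "\<dots> = (\<Sum>v\<in>T. real (card (nbhd n G v \<inter> S)) - real (card (nbhd n G v - S)))"
    unfolding T_def by (intro sum.cong refl sum_arcs_into_complement[OF S])
  also have "\<dots> < (\<Sum>v\<in>T. 0)"
  proof (rule sum_strict_mono)
    show "finite T" "T \<noteq> {}" by (simp add: T_def) fact
    fix v assume v: "v \<in> T"
    have "card (nbhd n G v) = card (nbhd n G v \<inter> S) + card (nbhd n G v - S)"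
      by (metis card_Int_Diff finite_subset nbhd_def finite_lessThan mem_Collect_eq subsetI)
    moreover have "real (card (nbhd n G v \<inter> S)) < real (card (nbhd n G v)) / 2"
      using assms v unfolding closed_set_def T_def by auto
    ultimately show "real (card (nbhd n G v \<inter> S)) - real (card (nbhd n G v - S)) < 0"
      by simp
  qed
  finally show ?thesis by (simp add: T_def)
qed

lemma sum_pair_weight:
  assumes T: "T \<subseteq> {..<n}"
  shows "(\<Sum>e\<in>vertex_pairs n. pair_weight T e) = real (card T) * (real n - 2 * real (card T) + 1)"
proof -
  have signs: "(\<Sum>u<n. (if u \<in> T then -1 else 1::real)) = real n - 2 * real (card T)"
  proof -
    have "(\<Sum>u<n. (if u \<in> T then -1 else 1::real)) = (\<Sum>u<n. 1 - 2 * of_bool (u \<in> T))"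
      by (intro sum.cong) auto
    also have "\<dots> = real n - 2 * real (card T)"
      by (simp add: sum_subtractf sum_distrib_left[symmetric] sum_lessThan_indicator[OF T])
    finally show ?thesis .
  qed
  have "(\<Sum>e\<in>vertex_pairs n. pair_weight T e) = (\<Sum>v<n. \<Sum>u<n. if u = v then 0 else arc_weight T u v)"
    unfolding pair_weight_def sum_vertex_pairs_ordered by (rule sum.swap)
  also have "\<dots> = (\<Sum>v<n. of_bool (v \<in> T) * (real n - 2 * real (card T) + 1))"
  proof (intro sum.cong refl)
    fix v assume "v \<in> {..<n}"
    then have "(\<Sum>u<n. if u = v then 0 else arc_weight T u v) = (\<Sum>u<n. arc_weight T u v) - arc_weight T v v"
      by (intro sum_lessThan_skip) auto
    also have "(\<Sum>u<n. arc_weight T u v) = of_bool (v \<in> T) * (\<Sum>u<n. (if u \<in> T then -1 else 1::real))"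
      by (simp add: arc_weight_def sum_distrib_left)
    finally show "(\<Sum>u<n. if u = v then 0 else arc_weight T u v) = of_bool (v \<in> T) * (real n - 2 * real (card T) + 1)"
      using signs by (auto simp: arc_weight_def)
  qed
  also have "\<dots> = real (card T) * (real n - 2 * real (card T) + 1)"
    by (simp add: sum_distrib_right[symmetric] sum_lessThan_indicator[OF T])
  finally show ?thesis .
qed

lemma sum_pair_weight_squared:
  assumes T: "T \<subseteq> {..<n}"
  shows "(\<Sum>e\<in>vertex_pairs n. (pair_weight T e)^2) = real (card T) * (real n + real (card T) - 2)"
proof -
  define f where "f u v = (arc_weight T u v)^2 + arc_weight T u v * arc_weight T v u" for u v
  have f: "f u v = of_bool (v \<in> T) * (1 + of_bool (u \<in> T))" for u v
    by (auto simp: f_def arc_weight_def)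
  have "(\<Sum>e\<in>vertex_pairs n. (pair_weight T e)^2) = (\<Sum>e\<in>vertex_pairs n. f (fst e) (snd e) + f (snd e) (fst e))"
    unfolding pair_weight_def f_def by (intro sum.cong refl) (simp add: power2_eq_square algebra_simps)
  also have "\<dots> = (\<Sum>v<n. \<Sum>u<n. if u = v then 0 else f u v)"
    unfolding sum_vertex_pairs_ordered by (rule sum.swap)
  also have "\<dots> = (\<Sum>v<n. of_bool (v \<in> T) * (real n + real (card T) - 2))"
  proof (intro sum.cong refl)
    fix v assume "v \<in> {..<n}"
    then have "(\<Sum>u<n. if u = v then 0 else f u v) = (\<Sum>u<n. f u v) - f v v"
      by (intro sum_lessThan_skip) auto
    also have "(\<Sum>u<n. f u v) = of_bool (v \<in> T) * (real n + real (card T))"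
      unfolding f by (simp add: sum_distrib_left[symmetric] sum.distrib sum_lessThan_indicator[OF T])
    finally show "(\<Sum>u<n. if u = v then 0 else f u v) = of_bool (v \<in> T) * (real n + real (card T) - 2)"
      by (auto simp: f)
  qed
  also have "\<dots> = real (card T) * (real n + real (card T) - 2)"
    by (simp add: sum_distrib_right[symmetric] sum_lessThan_indicator[OF T])
  finally show ?thesis .
qed

text \<open>Since \<open>F\<close> only ever sees the three weight values, it agrees on them with a quadratic
  without constant term, so the sum follows from the first two moments above.\<close>

lemma sum_pair_weight_fun:
  fixes F :: "real \<Rightarrow> real"
  assumes T: "T \<subseteq> {..<n}" and "F 0 = 0"
  shows "(\<Sum>e\<in>vertex_pairs n. F (pair_weight T e))
    = real (card T) * (real n - real (card T)) * F 1 + real (card T) * (real (card T) - 1) / 2 * F (-2)"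
proof -
  define a where "a = (4 * F 1 - F (-2)) / 6"
  define b where "b = (2 * F 1 + F (-2)) / 6"
  have F: "F (pair_weight T e) = a * pair_weight T e + b * (pair_weight T e)^2" for e
    using pair_weight_cases[of T e] \<open>F 0 = 0\<close> by (auto simp: a_def b_def field_simps)
  have "(\<Sum>e\<in>vertex_pairs n. F (pair_weight T e))
      = a * (\<Sum>e\<in>vertex_pairs n. pair_weight T e) + b * (\<Sum>e\<in>vertex_pairs n. (pair_weight T e)^2)"
    unfolding F by (simp add: sum.distrib sum_distrib_left)
  also have "\<dots> = real (card T) * (real n - real (card T)) * F 1 + real (card T) * (real (card T) - 1) / 2 * F (-2)"
    unfolding sum_pair_weight[OF T] sum_pair_weight_squared[OF T] a_def b_def by (simp add: field_simps)
  finally show ?thesis .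
qed

lemma sum_pair_weight_squared_le:
  assumes T: "T \<subseteq> {..<n}"
  shows "(\<Sum>e\<in>vertex_pairs n. (pair_weight T e)^2) \<le> 2 * real (card T) * real n"
proof -
  have "real (card T) * real (card T) \<le> real (card T) * real n"
    using card_mono[OF _ T] by (intro mult_left_mono) auto
  then show ?thesis unfolding sum_pair_weight_squared[OF T] by (simp add: algebra_simps)
qed

section \<open>Exponential moments of the excess\<close>

lemma finite_set_pmf_gnp: "finite (set_pmf (gnp n p))"
  unfolding gnp_def
  by (rule finite_subset[OF set_Pi_pmf_subset']) auto

text \<open>Markov's inequality for \<open>exp (-l X)\<close>; independence makes the moment generating function
  of the weighted edge count a product over the vertex pairs.\<close>

lemma prob_weighted_edge_sum_nonpos_le:
  fixes w :: "nat \<times> nat \<Rightarrow> real"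
  assumes p: "0 \<le> p" "p \<le> 1" and l: "0 \<le> l"
  shows "measure_pmf.prob (gnp n p) {G. (\<Sum>e\<in>vertex_pairs n. w e * of_bool (G e)) \<le> 0}
          \<le> (\<Prod>e\<in>vertex_pairs n. 1 - p + p * exp (- l * w e))"
proof -
  define X where "X G = (\<Sum>e\<in>vertex_pairs n. w e * of_bool (G e))" for G
  define f where "f e b = exp (- l * (w e * of_bool b))" for e b
  have exp_X: "exp (- l * X G) = (\<Prod>e\<in>vertex_pairs n. f e (G e))" for G
    unfolding X_def f_def sum_distrib_left by (rule exp_sum) simp
  have integrable: "integrable (measure_pmf (gnp n p)) h" for h :: "_ \<Rightarrow> real"
    by (intro integrable_measure_pmf_finite finite_set_pmf_gnp)
  have "measure_pmf.prob (gnp n p) {G. X G \<le> 0}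
        = measure_pmf.expectation (gnp n p) (indicator {G. X G \<le> 0})"
    by simp
  also have "\<dots> \<le> measure_pmf.expectation (gnp n p) (\<lambda>G. exp (- l * X G))"
  proof (rule integral_mono[OF integrable integrable])
    fix G
    show "indicator {G. X G \<le> 0} G \<le> exp (- l * X G)"
      using l mult_nonneg_nonpos[of l "X G"] by (cases "X G \<le> 0") auto
  qed
  also have "\<dots> = (\<Prod>e\<in>vertex_pairs n. measure_pmf.expectation (bernoulli_pmf p) (f e))"
    unfolding exp_X gnp_def
    by (subst expectation_prod_Pi_pmf) (auto simp: f_def intro!: integrable_measure_pmf_finite)
  also have "\<dots> = (\<Prod>e\<in>vertex_pairs n. 1 - p + p * exp (- l * w e))"
    using p by (intro prod.cong refl) (simp add: f_def algebra_simps)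
  finally show ?thesis unfolding X_def .
qed

lemma prod_le_exp_sum:
  fixes f g :: "'a \<Rightarrow> real"
  assumes "\<And>e. e \<in> A \<Longrightarrow> 0 \<le> f e \<and> f e \<le> exp (g e)"
  shows "(\<Prod>e\<in>A. f e) \<le> exp (\<Sum>e\<in>A. g e)"
proof (cases "finite A")
  case True
  have "(\<Prod>e\<in>A. f e) \<le> (\<Prod>e\<in>A. exp (g e))" by (rule prod_mono) (use assms in auto)
  also have "\<dots> = exp (\<Sum>e\<in>A. g e)" by (rule exp_sum[symmetric]) fact
  finally show ?thesis .
qed simp

lemma exp_le_quadratic: "exp (z::real) \<le> 1 + z + z^2 * exp \<bar>z\<bar> / 2"
proof -
  obtain t where t: "\<bar>t\<bar> \<le> \<bar>z\<bar>" "exp z = (\<Sum>m<2. z ^ m / fact m) + exp t / fact 2 * z ^ 2"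
    using Maclaurin_exp_le[of z 2] by blast
  have "exp t * z^2 \<le> exp \<bar>z\<bar> * z^2" using t(1) by (intro mult_right_mono) auto
  then show ?thesis using t(2) by (simp add: numeral_2_eq_2 algebra_simps)
qed

lemma bernoulli_mgf_le_exp:
  fixes p y :: real
  shows "1 - p + p * exp y \<le> exp (p * (exp y - 1))"
  using exp_ge_add_one_self[of "p * (exp y - 1)"] by (simp add: algebra_simps)

lemma bernoulli_mgf_le_exp_quadratic:
  fixes p y :: real
  assumes p: "0 \<le> p" "p \<le> 1"
  shows "1 - p + p * exp y \<le> exp (p * y + p * (1 - p) * y^2 * exp \<bar>y\<bar> / 2)"
proof -
  define q where "q = 1 - p"
  have q: "0 \<le> q" "q \<le> 1" "p + q = 1" using p unfolding q_def by auto
  have exp_scaled: "exp (a * y) \<le> 1 + a * y + a^2 * y^2 * exp \<bar>y\<bar> / 2" if "\<bar>a\<bar> \<le> 1" for a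
  proof -
    have "exp \<bar>a * y\<bar> \<le> exp \<bar>y\<bar>"
      using that by (simp add: abs_mult mult_left_le_one_le)
    then have "(a * y)^2 * exp \<bar>a * y\<bar> / 2 \<le> a^2 * y^2 * exp \<bar>y\<bar> / 2"
      by (simp add: power_mult_distrib divide_right_mono mult_left_mono)
    then show ?thesis using exp_le_quadratic[of "a * y"] by simp
  qed
  have "q * exp (- p * y) + p * exp (q * y)
        \<le> q * (1 - p * y + p^2 * y^2 * exp \<bar>y\<bar> / 2) + p * (1 + q * y + q^2 * y^2 * exp \<bar>y\<bar> / 2)"
    using exp_scaled[of "- p"] exp_scaled[of q] p q by (intro add_mono mult_left_mono) auto
  also have "\<dots> = (p + q) + p * q * y^2 * exp \<bar>y\<bar> / 2 * (p + q)"
    by (simp add: algebra_simps power2_eq_square)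
  also have "\<dots> \<le> exp (p * q * y^2 * exp \<bar>y\<bar> / 2)"
    using q exp_ge_add_one_self by simp
  finally have centred: "q * exp (- p * y) + p * exp (q * y) \<le> exp (p * q * y^2 * exp \<bar>y\<bar> / 2)" .
  have "1 - p + p * exp y = exp (p * y) * (q * exp (- p * y) + p * exp (q * y))"
    unfolding q_def by (simp add: algebra_simps exp_add[symmetric] exp_minus_inverse)
  also have "\<dots> \<le> exp (p * y) * exp (p * q * y^2 * exp \<bar>y\<bar> / 2)"
    by (intro mult_left_mono centred) auto
  also have "\<dots> = exp (p * y + p * (1 - p) * y^2 * exp \<bar>y\<bar> / 2)"
    by (simp add: exp_add q_def)
  finally show ?thesis .
qed

lemma prob_excess_nonpos_le_mgf:
  assumes "0 \<le> p" "p \<le> 1" "0 \<le> l"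
  shows "measure_pmf.prob (gnp n p) {G. excess n T G \<le> 0}
          \<le> (\<Prod>e\<in>vertex_pairs n. 1 - p + p * exp (- l * pair_weight T e))"
  unfolding excess_def by (rule prob_weighted_edge_sum_nonpos_le[OF assms])

text \<open>Chernoff bound with \<open>l = ln M\<close>.\<close>

lemma prob_excess_nonpos_chernoff:
  assumes p: "0 \<le> p" "p \<le> 1" and T: "T \<subseteq> {..<n}" and M: "M \<ge> 1"
  shows "measure_pmf.prob (gnp n p) {G. excess n T G \<le> 0}
     \<le> exp (- (p * real (card T) * ((real n - real (card T)) * (1 - 1 / M) - real (card T) * M^2 / 2)))"
proof -
  define t where "t = real (card T)"
  define l where "l = ln M"
  have "l \<ge> 0" using M unfolding l_def by simp
  have exp_l1: "exp (- l * 1) = 1 / M" using M by (simp add: l_def exp_minus divide_inverse)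
  have "exp (- l * (-2)) = exp l * exp l" by (simp add: exp_add[symmetric])
  then have exp_l2: "exp (- l * (-2)) = M^2" using M by (simp add: l_def power2_eq_square)
  have "measure_pmf.prob (gnp n p) {G. excess n T G \<le> 0}
      \<le> (\<Prod>e\<in>vertex_pairs n. 1 - p + p * exp (- l * pair_weight T e))"
    by (rule prob_excess_nonpos_le_mgf[OF p \<open>l \<ge> 0\<close>])
  also have "\<dots> \<le> exp (\<Sum>e\<in>vertex_pairs n. (\<lambda>w. p * (exp (- l * w) - 1)) (pair_weight T e))"
    by (intro prod_le_exp_sum) (use p bernoulli_mgf_le_exp in \<open>auto intro!: add_nonneg_nonneg\<close>)
  also have "(\<Sum>e\<in>vertex_pairs n. (\<lambda>w. p * (exp (- l * w) - 1)) (pair_weight T e))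
      = t * (real n - t) * (p * (1 / M - 1)) + t * (t - 1) / 2 * (p * (M^2 - 1))"
    unfolding t_def by (subst sum_pair_weight_fun[OF T]) (simp_all only: exp_l1 exp_l2, simp)
  also have "\<dots> \<le> - (p * t * ((real n - t) * (1 - 1 / M) - t * M^2 / 2))"
  proof -
    have "M^2 \<ge> 1" using M by (simp add: one_le_power)
    then have "0 \<le> t * (t + M^2 - 1)" by (simp add: t_def)
    also have "\<dots> = t * t * M^2 - t * (t - 1) * (M^2 - 1)" by (simp add: algebra_simps)
    finally have "t * (t - 1) / 2 * (M^2 - 1) \<le> t * t / 2 * M^2" by (simp add: field_simps)
    then have "t * (t - 1) / 2 * (p * (M^2 - 1)) \<le> p * (t * t / 2 * M^2)"
      using p by (metis mult.left_commute mult_left_mono)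
    then show ?thesis by (simp add: algebra_simps)
  qed
  finally show ?thesis unfolding t_def by simp
qed

lemma prob_excess_nonpos_quadratic:
  assumes p: "0 \<le> p" "p \<le> 1" and T: "T \<subseteq> {..<n}" and l: "0 \<le> l" "l \<le> 1/2"
  shows "measure_pmf.prob (gnp n p) {G. excess n T G \<le> 0}
     \<le> exp (- (l * p * real (card T) * (real n - 2 * real (card T) + 1))
            + 3 * p * (1 - p) * l^2 * real (card T) * real n)"
proof -
  define C where "C = p * (1 - p) * l^2 * (3/2)"
  have "C \<ge> 0" using p by (simp add: C_def)
  have "measure_pmf.prob (gnp n p) {G. excess n T G \<le> 0}
      \<le> (\<Prod>e\<in>vertex_pairs n. 1 - p + p * exp (- l * pair_weight T e))"
    by (rule prob_excess_nonpos_le_mgf[OF p l(1)])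
  also have "\<dots> \<le> exp (\<Sum>e\<in>vertex_pairs n. - (l * p) * pair_weight T e + C * (pair_weight T e)^2)"
  proof (intro prod_le_exp_sum conjI)
    fix e
    define y where "y = - l * pair_weight T e"
    have "\<bar>y\<bar> \<le> 1" using pair_weight_cases[of T e] l by (auto simp: y_def)
    then have "exp \<bar>y\<bar> \<le> 3" using exp_le by (meson exp_le_cancel_iff order_trans)
    then have "p * (1 - p) * y^2 * exp \<bar>y\<bar> / 2 \<le> p * (1 - p) * y^2 * 3 / 2"
      using p by (intro divide_right_mono mult_left_mono) auto
    then have quadratic: "p * y + p * (1 - p) * y^2 * exp \<bar>y\<bar> / 2 \<le> - (l * p) * pair_weight T e + C * (pair_weight T e)^2"
      by (simp add: y_def C_def power_mult_distrib algebra_simps)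
    have "1 - p + p * exp y \<le> exp (p * y + p * (1 - p) * y^2 * exp \<bar>y\<bar> / 2)"
      by (rule bernoulli_mgf_le_exp_quadratic[OF p])
    also have "\<dots> \<le> exp (- (l * p) * pair_weight T e + C * (pair_weight T e)^2)"
      using quadratic by simp
    finally show "1 - p + p * exp (- l * pair_weight T e) \<le> exp (- (l * p) * pair_weight T e + C * (pair_weight T e)^2)"
      by (simp add: y_def)
    show "0 \<le> 1 - p + p * exp (- l * pair_weight T e)" using p by (intro add_nonneg_nonneg) auto
  qed
  also have "(\<Sum>e\<in>vertex_pairs n. - (l * p) * pair_weight T e + C * (pair_weight T e)^2)
      = - (l * p) * (\<Sum>e\<in>vertex_pairs n. pair_weight T e) + C * (\<Sum>e\<in>vertex_pairs n. (pair_weight T e)^2)"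
    by (simp only: sum.distrib sum_distrib_left)
  also have "\<dots> \<le> - (l * p * real (card T) * (real n - 2 * real (card T) + 1))
                  + 3 * p * (1 - p) * l^2 * real (card T) * real n"
    using mult_left_mono[OF sum_pair_weight_squared_le[OF T] \<open>C \<ge> 0\<close>]
    by (simp add: sum_pair_weight[OF T] C_def algebra_simps)
  finally show ?thesis by simp
qed

section \<open>Small and large complements\<close>

lemma chernoff_exponent_small_set:
  fixes e t N :: real
  assumes e: "0 < e" "e \<le> 1" and t: "0 \<le> t" "t \<le> e^3 / 512 * N"
  shows "N * (1 - e / 4) \<le> (N - t) * (1 - e / 8) - t * (8 / e)^2 / 2"
proof -
  have "0 \<le> e^3 / 512 * N" using t by linarith
  then have "0 \<le> N" using e by (simp add: zero_le_mult_iff)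
  have "e^3 = e * e^2" by (simp add: power3_eq_cube power2_eq_square)
  also have "\<dots> \<le> e" using e by (simp add: mult_left_le power_le_one)
  finally have "e^3 / 512 * N \<le> e / 16 * N"
    using e \<open>0 \<le> N\<close> by (intro mult_right_mono) auto
  then have t_le: "t \<le> e / 16 * N" using t by linarith
  have "t * (8 / e)^2 / 2 = t * 32 / e^2"
    using e by (simp add: power2_eq_square field_simps)
  also have "\<dots> \<le> (e^3 / 512 * N) * 32 / e^2"
    using t e by (intro divide_right_mono mult_right_mono) auto
  also have "\<dots> = e / 16 * N"
    using e by (simp add: power2_eq_square power3_eq_cube field_simps)
  finally have "t * (8 / e)^2 / 2 \<le> e / 16 * N" .
  moreover have "t * (1 - e / 8) \<le> t" using t e by (simp add: mult_left_le)
  moreover have "N * (1 - e / 4) = N - e / 8 * N - e / 16 * N - e / 16 * N"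
    by (simp add: field_simps)
  ultimately have "N * (1 - e / 4) \<le> N - e / 8 * N - t * (1 - e / 8) - t * (8 / e)^2 / 2"
    using t_le by linarith
  also have "\<dots> = (N - t) * (1 - e / 8) - t * (8 / e)^2 / 2"
    by (simp add: field_simps)
  finally show ?thesis .
qed

lemma prob_excess_nonpos_small_set:
  fixes e L :: real
  assumes p: "0 \<le> p" "p \<le> 1" and T: "T \<subseteq> {..<n}" and e: "0 < e" "e \<le> 1"
    and L: "0 \<le> L" "(1 + e) * L \<le> p * real n"
    and small: "real (card T) \<le> e^3 / 512 * real n"
  shows "measure_pmf.prob (gnp n p) {G. excess n T G \<le> 0} \<le> exp (- ((1 + e / 2) * L)) ^ card T"
proof -
  define t where "t = real (card T)"
  have "0 \<le> t" by (simp add: t_def)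
  have "(1 - e / 4) * ((1 + e) * L) - (1 + e / 2) * L = e * (1 - e) / 4 * L"
    by (simp add: field_simps)
  moreover have "0 \<le> e * (1 - e) / 4 * L" using e L by simp
  ultimately have "(1 + e / 2) * L \<le> (1 - e / 4) * ((1 + e) * L)" by linarith
  also have "\<dots> \<le> (1 - e / 4) * (p * real n)"
    using e L by (intro mult_left_mono) auto
  also have "\<dots> \<le> p * ((real n - t) * (1 - e / 8) - t * (8 / e)^2 / 2)"
    using mult_left_mono[OF chernoff_exponent_small_set[OF e \<open>0 \<le> t\<close> small[folded t_def]] p(1)]
    by (simp add: mult_ac)
  finally have exponent: "t * ((1 + e / 2) * L) \<le> t * (p * ((real n - t) * (1 - e / 8) - t * (8 / e)^2 / 2))"
    using \<open>0 \<le> t\<close> by (rule mult_left_mono)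
  have "8 / e \<ge> 1" using e by simp
  from prob_excess_nonpos_chernoff[OF p T this]
  have "measure_pmf.prob (gnp n p) {G. excess n T G \<le> 0}
     \<le> exp (- (p * t * ((real n - t) * (1 - e / 8) - t * (8 / e)^2 / 2)))"
    by (simp add: t_def)
  also have "\<dots> \<le> exp (- (t * ((1 + e / 2) * L)))" using exponent by (simp add: mult_ac)
  also have "\<dots> = exp (- ((1 + e / 2) * L)) ^ card T"
    unfolding t_def by (simp add: exp_of_nat_mult[symmetric])
  finally show ?thesis .
qed

lemma quadratic_exponent_le:
  fixes \<mu> V N :: real
  assumes "0 < V" "0 \<le> N" "6 * N \<le> \<mu>" "6 * V * N \<le> \<mu>^2"
  obtains l where "0 \<le> l" "l \<le> 1/2" "- (l * \<mu>) + V * l^2 \<le> - (3/2 * N)"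
proof
  define l where "l = min (1/2) (\<mu> / (2 * V))"
  show "0 \<le> l" "l \<le> 1/2" using assms unfolding l_def by auto
  have "V * l \<le> \<mu> / 2"
    using assms unfolding l_def by (simp add: min_def field_simps)
  then have "- (l * \<mu>) + V * l^2 \<le> - (l * \<mu>) / 2"
    using \<open>0 \<le> l\<close> mult_left_mono[of "V * l" "\<mu> / 2" l] by (simp add: power2_eq_square mult_ac)
  also have "\<dots> \<le> - (3/2 * N)"
  proof (cases "1/2 \<le> \<mu> / (2 * V)")
    case True
    then show ?thesis using assms by (simp add: l_def)
  next
    case False
    then have "l * \<mu> = \<mu>^2 / (2 * V)" by (simp add: l_def power2_eq_square)
    moreover have "6 * V * N / (2 * V) \<le> \<mu>^2 / (2 * V)"
      using assms by (intro divide_right_mono) auto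
    ultimately show ?thesis using assms by simp
  qed
  finally show "- (l * \<mu>) + V * l^2 \<le> - (3/2 * N)" .
qed

text \<open>With \<open>\<mu>\<close> the mean of the excess and \<open>V = 3 p (1 - p) t N\<close> these are the hypotheses of
  \<open>quadratic_exponent_le\<close>; below \<open>t = 2N/5\<close> they come from \<open>p t \<ge> 450\<close>, above it from the gap.\<close>

lemma mean_bounds_below_two_fifths:
  fixes p t N \<mu> :: real
  assumes p: "0 < p" "p \<le> 1" and "0 \<le> N" "t \<le> 2 * N / 5" and pt: "450 \<le> p * t"
    and \<mu>: "p * t * (N - 2 * t) \<le> \<mu>"
  shows "6 * N \<le> \<mu>" and "18 * (p * (1 - p)) * t * N^2 \<le> \<mu>^2"
proof -
  have "0 < p * t" using pt by linarith
  then have "0 < t" using p by (simp add: zero_less_mult_iff)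
  have "p * t * (N / 5) \<le> p * t * (N - 2 * t)"
    using assms \<open>0 < t\<close> by (intro mult_left_mono) auto
  then have \<mu>_ge: "p * t * (N / 5) \<le> \<mu>" using \<mu> by linarith
  moreover have "450 * (N / 5) \<le> p * t * (N / 5)"
    using pt \<open>0 \<le> N\<close> by (intro mult_right_mono) auto
  ultimately show "6 * N \<le> \<mu>" using \<open>0 \<le> N\<close> by linarith
  have "18 * (p * (1 - p)) * t * N^2 \<le> 18 * p * t * N^2"
    using p \<open>0 < t\<close> by (intro mult_right_mono) (auto simp: mult_left_le)
  also have "\<dots> = 450 * (p * t) * N^2 / 25" by simp
  also have "\<dots> \<le> (p * t) * (p * t) * N^2 / 25"
    using pt by (intro divide_right_mono mult_right_mono) auto
  also have "\<dots> = (p * t * (N / 5))^2" by (simp add: power2_eq_square)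
  also have "\<dots> \<le> \<mu>^2"
    using \<mu>_ge p \<open>0 < t\<close> \<open>0 \<le> N\<close> by (intro power_mono) auto
  finally show "18 * (p * (1 - p)) * t * N^2 \<le> \<mu>^2" .
qed

lemma mean_bounds_above_two_fifths:
  fixes p t N \<mu> :: real
  assumes p: "0 < p" "p < 1" and t: "2 * N / 5 < t" "0 < N - 2 * t"
    and pqN: "5 \<le> p * (1 - p) * N" and gap: "49 * N * (1 - p) \<le> p * (N - 2 * t)^2"
    and \<mu>: "p * t * (N - 2 * t) \<le> \<mu>"
  shows "6 * N \<le> \<mu>" and "18 * (p * (1 - p)) * t * N^2 \<le> \<mu>^2"
proof -
  have "0 < N" "0 < t" using t by linarith+
  have "0 < p * (1 - p)" using p by simp
  have "49 * (p * (1 - p)) * N * t^2 = p * t^2 * (49 * N * (1 - p))" by simp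
  also have "\<dots> \<le> p * t^2 * (p * (N - 2 * t)^2)"
    using gap p by (intro mult_left_mono) auto
  also have "\<dots> = (p * t * (N - 2 * t))^2" by (simp add: power2_eq_square)
  also have "\<dots> \<le> \<mu>^2"
    using \<mu> p \<open>0 < t\<close> t by (intro power_mono) auto
  finally have sq: "49 * (p * (1 - p)) * N * t^2 \<le> \<mu>^2" .
  have "(p * (1 - p) * N * t) * (18 * N) \<le> (p * (1 - p) * N * t) * (49 * t)"
    using t \<open>0 < p * (1 - p)\<close> \<open>0 < N\<close> \<open>0 < t\<close> by (intro mult_left_mono) auto
  then show "18 * (p * (1 - p)) * t * N^2 \<le> \<mu>^2"
    using sq by (simp add: power2_eq_square mult_ac)
  have "(6 * N)^2 \<le> 49 * 5 * (2 * N / 5)^2" by (simp add: power2_eq_square)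
  also have "\<dots> \<le> 49 * (p * (1 - p) * N) * t^2"
    using pqN t \<open>0 < N\<close> by (intro mult_mono power_mono) auto
  also have "\<dots> \<le> \<mu>^2" using sq by (simp add: mult_ac)
  finally have "(6 * N)^2 \<le> \<mu>^2" .
  moreover have "0 < p * t * (N - 2 * t)" using p \<open>0 < t\<close> t by simp
  then have "0 \<le> \<mu>" using \<mu> by linarith
  ultimately show "6 * N \<le> \<mu>" by (rule power2_le_imp_le)
qed

lemma prob_excess_nonpos_large_set:
  fixes c :: real
  assumes p: "0 < p" "p < 1" and T: "T \<subseteq> {..<n}"
    and pqn: "5 \<le> p * (1 - p) * real n" and cpn: "450 \<le> c * p * real n"
    and large: "c * real n < real (card T)"
    and gap: "0 < real n - 2 * real (card T)" "49 * real n * (1 - p) \<le> p * (real n - 2 * real (card T))^2"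
  shows "measure_pmf.prob (gnp n p) {G. excess n T G \<le> 0} \<le> exp (- (3/2 * real n))"
proof -
  define t where "t = real (card T)"
  define N where "N = real n"
  define \<mu> where "\<mu> = p * t * (N - 2 * t + 1)"
  define V where "V = 3 * p * (1 - p) * t * N"
  have "0 < c * p * real n" using cpn by linarith
  then have "0 < c * real n" using p by (simp add: zero_less_mult_iff)
  then have "0 < N" "0 < t" using large gap by (auto simp: N_def t_def)
  have "0 < V" using p \<open>0 < N\<close> \<open>0 < t\<close> by (simp add: V_def)
  have \<mu>: "p * t * (N - 2 * t) \<le> \<mu>" using p \<open>0 < t\<close> by (simp add: \<mu>_def algebra_simps)
  have "6 * N \<le> \<mu> \<and> 6 * V * N \<le> \<mu>^2"
  proof (cases "t \<le> 2 * N / 5")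
    case True
    have "c * p * real n \<le> p * t"
      using large p by (simp add: t_def mult_left_mono mult.left_commute)
    then have "450 \<le> p * t" using cpn by linarith
    from mean_bounds_below_two_fifths[OF _ _ _ True this \<mu>] p \<open>0 < N\<close>
    show ?thesis by (simp add: V_def power2_eq_square mult_ac)
  next
    case False
    from mean_bounds_above_two_fifths[OF p _ _ _ _ \<mu>] False gap pqn
    show ?thesis by (simp add: V_def N_def t_def power2_eq_square mult_ac)
  qed
  then obtain l where l: "0 \<le> l" "l \<le> 1/2" "- (l * \<mu>) + V * l^2 \<le> - (3/2 * N)"
    using quadratic_exponent_le[OF \<open>0 < V\<close>] \<open>0 < N\<close> by (metis less_imp_le)
  have "measure_pmf.prob (gnp n p) {G. excess n T G \<le> 0}
     \<le> exp (- (l * p * t * (N - 2 * t + 1)) + 3 * p * (1 - p) * l^2 * t * N)"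
    using prob_excess_nonpos_quadratic[OF _ _ T l(1,2)] p by (simp add: t_def N_def)
  also have "- (l * p * t * (N - 2 * t + 1)) + 3 * p * (1 - p) * l^2 * t * N = - (l * \<mu>) + V * l^2"
    by (simp add: \<mu>_def V_def algebra_simps)
  also have "exp \<dots> \<le> exp (- (3/2 * N))" using l(3) by simp
  finally show ?thesis by (simp add: N_def)
qed

section \<open>The union bound\<close>

lemma sum_Pow_power_card:
  fixes x :: real
  assumes "finite A"
  shows "(\<Sum>X\<in>Pow A. x ^ card X) = (1 + x) ^ card A"
proof -
  have "(1 + x) ^ card A = (\<Prod>a\<in>A. x + 1)" by (simp add: add.commute)
  also have "\<dots> = (\<Sum>X\<in>Pow A. (\<Prod>a\<in>X. x) * (\<Prod>a\<in>A - X. 1))" by (rule prod_add) fact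
  finally show ?thesis by simp
qed

lemma sum_nonempty_subsets_le:
  fixes x y :: real
  assumes "0 \<le> x" "0 \<le> y"
  shows "(\<Sum>T\<in>Pow {..<n} - {{}}. x ^ card T + y) \<le> exp (real n * x) - 1 + 2 ^ n * y"
proof -
  have "(\<Sum>T\<in>Pow {..<n}. x ^ card T) = x ^ card ({} :: nat set) + (\<Sum>T\<in>Pow {..<n} - {{}}. x ^ card T)"
    by (rule sum.remove) auto
  then have "(\<Sum>T\<in>Pow {..<n} - {{}}. x ^ card T) = (1 + x) ^ n - 1"
    using sum_Pow_power_card[of "{..<n}" x] by simp
  also have "(1 + x) ^ n \<le> exp x ^ n"
    using assms by (intro power_mono) (auto simp: add.commute exp_ge_add_one_self)
  also have "exp x ^ n = exp (real n * x)" by (simp add: exp_of_nat_mult)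
  finally have powers: "(\<Sum>T\<in>Pow {..<n} - {{}}. x ^ card T) \<le> exp (real n * x) - 1" by simp
  have "card (Pow {..<n} - {{}}) \<le> card (Pow {..<n::nat})" by (intro card_mono) auto
  then have "real (card (Pow {..<n} - {{}})) \<le> 2 ^ n"
    by (metis card_Pow card_lessThan finite_lessThan of_nat_le_iff of_nat_numeral of_nat_power)
  then have "real (card (Pow {..<n} - {{}})) * y \<le> 2 ^ n * y"
    using assms(2) by (rule mult_right_mono)
  with powers show ?thesis by (simp add: sum.distrib)
qed

lemma closed_set_complement_gap:
  assumes "closed_set n G S" and large: "real n / 2 + a < real (card S)"
  shows "{..<n} - S \<noteq> {}" and "2 * a < real n - 2 * real (card ({..<n} - S))"
proof -
  have S: "S \<subset> {..<n}" using assms(1) by (simp add: closed_set_def)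
  then show "{..<n} - S \<noteq> {}" by auto
  have "card S \<le> n"
    using S by (metis card_lessThan card_mono finite_lessThan psubset_imp_subset)
  moreover have "card ({..<n} - S) = n - card S"
    using S by (subst card_Diff_subset) (auto intro: finite_subset)
  ultimately show "2 * a < real n - 2 * real (card ({..<n} - S))"
    using large by (simp add: of_nat_diff)
qed

lemma large_closed_set_subset:
  "{G. \<exists>S. closed_set n G S \<and> real (card S) > real n / 2 + gap / 2}
     \<subseteq> (\<Union>T\<in>{T \<in> Pow {..<n}. T \<noteq> {} \<and> gap < real n - 2 * real (card T)}.
           {G. excess n T G \<le> 0})"
proof safe
  fix G S assume S: "closed_set n G S" "real (card S) > real n / 2 + gap / 2"
  then show "G \<in> (\<Union>T\<in>{T \<in> Pow {..<n}. T \<noteq> {} \<and> gap < real n - 2 * real (card T)}.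
                   {G. excess n T G \<le> 0})"
    using closed_set_complement_gap[OF S] closed_set_excess_neg[OF S(1)]
    by (intro UN_I[of "{..<n} - S"]) auto
qed

lemma prob_excess_nonpos_gap_set:
  fixes e L :: real
  assumes p: "0 < p" "p < 1" and e: "0 < e" "e \<le> 1"
    and L: "5 \<le> L" "450 \<le> e^3 / 512 * L" "(1 + e) * L \<le> p * (1 - p) * real n"
    and T: "T \<subseteq> {..<n}"
    and gap: "7 * real n / sqrt (real n * p / (1 - p)) < real n - 2 * real (card T)"
  shows "measure_pmf.prob (gnp n p) {G. excess n T G \<le> 0}
           \<le> exp (- ((1 + e / 2) * L)) ^ card T + exp (- (3/2 * real n))"
proof -
  have "p * (1 - p) * real n \<le> p * real n" using p by (simp add: mult_left_le algebra_simps)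
  with L have pn: "(1 + e) * L \<le> p * real n" by linarith
  have "0 < (1 + e) * L" using e L by simp
  then have "0 < p * (1 - p) * real n" using L by linarith
  then have "0 < real n" using p by (simp add: zero_less_mult_iff)
  show ?thesis
  proof (cases "real (card T) \<le> e^3 / 512 * real n")
    case True
    have "measure_pmf.prob (gnp n p) {G. excess n T G \<le> 0} \<le> exp (- ((1 + e / 2) * L)) ^ card T"
      using L(1) by (intro prob_excess_nonpos_small_set[OF _ _ T e _ pn True]) (use p in auto)
    then show ?thesis by (meson add_increasing2 exp_ge_zero)
  next
    case False
    have sqrt_pos: "0 < sqrt (real n * p / (1 - p))" using p \<open>0 < real n\<close> by simp
    have "49 * real n * (1 - p) / p = (7 * real n / sqrt (real n * p / (1 - p)))^2"
      using p \<open>0 < real n\<close> by (simp add: power_divide power_mult_distrib field_simps power2_eq_square)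
    also have "\<dots> \<le> (real n - 2 * real (card T))^2"
      using gap sqrt_pos \<open>0 < real n\<close> by (intro power_mono) auto
    finally have gap2: "49 * real n * (1 - p) \<le> p * (real n - 2 * real (card T))^2"
      using p by (simp add: pos_divide_le_eq mult.commute)
    have "0 < 7 * real n / sqrt (real n * p / (1 - p))"
      using sqrt_pos \<open>0 < real n\<close> by simp
    then have gap1: "0 < real n - 2 * real (card T)" using gap by linarith
    have "L \<le> (1 + e) * L" using e L by simp
    then have pqn: "5 \<le> p * (1 - p) * real n" and "L \<le> p * real n" using L pn by linarith+
    then have "e^3 / 512 * L \<le> e^3 / 512 * (p * real n)"
      using e by (intro mult_left_mono) auto
    then have cpn: "450 \<le> e^3 / 512 * p * real n" using L by (simp add: mult_ac)
    have "e^3 / 512 * real n < real (card T)" using False by simp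
    from prob_excess_nonpos_large_set[OF p T pqn cpn this gap1 gap2]
    show ?thesis by (meson add_increasing exp_ge_zero zero_le_power)
  qed
qed

lemma prob_large_closed_set_le:
  fixes e :: real
  assumes p: "0 \<le> p" "p \<le> 1" and e: "0 < e" "e \<le> 1"
    and n: "5 \<le> ln (real n)" "450 \<le> e^3 / 512 * ln (real n)"
      "(1 + e) * ln (real n) \<le> p * (1 - p) * real n"
  shows "measure_pmf.prob (gnp n p) {G. \<exists>S. closed_set n G S \<and>
            real (card S) > real n / 2 + 7 * real n / (2 * sqrt (real n * p / (1 - p)))}
     \<le> exp (exp (- (e / 2) * ln (real n))) - 1 + (2 * exp (- 3/2)) ^ n"
proof -
  define x where "x = exp (- ((1 + e / 2) * ln (real n)))"
  define y where "y = exp (- (3/2 * real n))"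
  define gap where "gap = 7 * real n / sqrt (real n * p / (1 - p))"
  define \<T> where "\<T> = {T \<in> Pow {..<n}. T \<noteq> {} \<and> gap < real n - 2 * real (card T)}"
  have "0 < real n" using n(1) by (cases n) auto
  have "0 < (1 + e) * ln (real n)" using e n by simp
  then have "0 < p * (1 - p) * real n" using n(3) by linarith
  then have "0 < p * (1 - p)" by (simp add: zero_less_mult_iff)
  then have p': "0 < p" "p < 1" using p by (auto simp: zero_less_mult_iff)
  have "measure_pmf.prob (gnp n p) {G. \<exists>S. closed_set n G S \<and> real (card S) > real n / 2 + gap / 2}
      \<le> measure_pmf.prob (gnp n p) (\<Union>T\<in>\<T>. {G. excess n T G \<le> 0})"
    unfolding \<T>_def by (intro measure_pmf.finite_measure_mono large_closed_set_subset) auto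
  also have "\<dots> \<le> (\<Sum>T\<in>\<T>. measure_pmf.prob (gnp n p) {G. excess n T G \<le> 0})"
    by (intro measure_pmf.finite_measure_subadditive_finite) (auto simp: \<T>_def)
  also have "\<dots> \<le> (\<Sum>T\<in>\<T>. x ^ card T + y)"
    by (intro sum_mono prob_excess_nonpos_gap_set[OF p' e n, folded x_def y_def])
       (auto simp: \<T>_def gap_def)
  also have "\<dots> \<le> (\<Sum>T\<in>Pow {..<n} - {{}}. x ^ card T + y)"
    by (intro sum_mono2) (auto simp: \<T>_def x_def y_def)
  also have "\<dots> \<le> exp (real n * x) - 1 + 2 ^ n * y"
    by (rule sum_nonempty_subsets_le) (auto simp: x_def y_def)
  also have "real n * x = exp (ln (real n)) * exp (- ((1 + e / 2) * ln (real n)))"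
    using \<open>0 < real n\<close> by (simp add: x_def)
  also have "\<dots> = exp (- (e / 2) * ln (real n))"
    by (simp add: exp_add[symmetric] algebra_simps)
  also have "2 ^ n * y = (2 * exp (- 3/2)) ^ n"
    by (simp add: y_def power_mult_distrib exp_of_nat_mult[symmetric] mult_ac)
  also have "real n / 2 + gap / 2 = real n / 2 + 7 * real n / (2 * sqrt (real n * p / (1 - p)))"
    by (simp add: gap_def)
  finally show ?thesis .
qed

lemma eventually_prob_large_closed_set_le:
  fixes e \<epsilon> :: real and p :: "nat \<Rightarrow> real"
  assumes e: "0 < e" "e \<le> 1" "e \<le> \<epsilon>" and p: "\<And>n. 0 \<le> p n \<and> p n \<le> 1"
    and dense: "\<forall>\<^sub>F n in sequentially. p n * (1 - p n) * real n \<ge> (1 + \<epsilon>) * ln (real n)"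
  shows "\<forall>\<^sub>F n in sequentially. measure_pmf.prob (gnp n (p n))
      {G. \<exists>S. closed_set n G S \<and> real (card S) > real n / 2 + 7 * real n / (2 * sqrt (real n * p n / (1 - p n)))}
      \<le> exp (exp (- (e / 2) * ln (real n))) - 1 + (2 * exp (- 3/2)) ^ n"
proof -
  have "\<forall>\<^sub>F n in sequentially. 5 \<le> ln (real n)" by real_asymp
  moreover have "\<forall>\<^sub>F n in sequentially. 450 \<le> e^3 / 512 * ln (real n)"
    using e(1) by real_asymp
  ultimately show ?thesis using dense
  proof eventually_elim
    case (elim n)
    have "(1 + e) * ln (real n) \<le> (1 + \<epsilon>) * ln (real n)"
      using e elim by (intro mult_right_mono) auto
    then have "(1 + e) * ln (real n) \<le> p n * (1 - p n) * real n" using elim by linarith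
    then show ?case using p e(1,2) elim by (intro prob_large_closed_set_le) auto
  qed
qed

lemma union_bound_tendsto_zero:
  fixes e :: real
  assumes "0 < e"
  shows "(\<lambda>n. exp (exp (- (e / 2) * ln (real n))) - 1 + (2 * exp (- 3/2)) ^ n) \<longlonglongrightarrow> 0"
proof -
  have "(\<lambda>n. exp (exp (- (e / 2) * ln (real n))) - 1) \<longlonglongrightarrow> 0"
    using assms by real_asymp
  moreover have "(\<lambda>n. (2 * exp (- 3/2 :: real)) ^ n) \<longlonglongrightarrow> 0"
  proof (rule LIMSEQ_power_zero)
    have "1 + 3/2 \<le> exp (3/2 :: real)" by (rule exp_ge_add_one_self)
    then show "norm (2 * exp (- 3/2 :: real)) < 1" by (simp add: exp_minus field_simps)
  qed
  ultimately show ?thesis using tendsto_add by fastforce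
qed

lemma prob_compl_tendsto_one:
  assumes "(\<lambda>n. measure_pmf.prob (M n) {x. P n x}) \<longlonglongrightarrow> 0"
  shows "(\<lambda>n. measure_pmf.prob (M n) {x. \<not> P n x}) \<longlonglongrightarrow> 1"
proof -
  have "measure_pmf.prob (M n) {x. \<not> P n x} = 1 - measure_pmf.prob (M n) {x. P n x}" for n
    using measure_pmf.prob_compl[of "{x. P n x}" "M n"] by (simp add: Compl_eq_Diff_UNIV[symmetric] Collect_neg_eq)
  then show ?thesis
    using tendsto_diff[OF tendsto_const assms, of 1] by simp
qed

theorem mainTheorem4:
  fixes \<epsilon> :: real and p :: "nat \<Rightarrow> real"
  assumes "\<epsilon> > 0"
    and "\<And>n. 0 \<le> p n \<and> p n \<le> 1"
    and "\<forall>\<^sub>F n in sequentially. p n * (1 - p n) * real n \<ge> (1 + \<epsilon>) * ln (real n)"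
  shows "(\<lambda>n. measure_pmf.prob (gnp n (p n))
            {G. \<not> (\<exists>S. closed_set n G S \<and>
                 real (card S) > real n / 2 + 7 * real n / (2 * sqrt (real n * p n / (1 - p n))))})
         \<longlonglongrightarrow> 1"
proof -
  define e where "e = min \<epsilon> 1"
  have e: "0 < e" "e \<le> 1" "e \<le> \<epsilon>" using assms(1) by (auto simp: e_def)
  note bound = eventually_prob_large_closed_set_le[OF e assms(2,3)]
  show ?thesis
    by (rule prob_compl_tendsto_one, rule tendsto_sandwich[OF _ bound tendsto_const])
       (simp, rule union_bound_tendsto_zero[OF e(1)])
qed

end
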